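(* Let $\mathcal{X}$ be a connected $n$-premaniplex and let $(\mathcal{Y},\eta)$ be an $(n,m)$-voltage operator that preserves connectivity. Let $\gamma\in\operatorname{Aut}(\mathcal{X}\rtimes_\eta\mathcal{Y})$ be such that for every flag $(x,y)$ of $\mathcal{X}\rtimes_\eta\mathcal{Y}$, the $\mathcal{Y}$-coordinate of $(x,y)\gamma$ is $y$. Then there is an automorphism $\alpha\in\operatorname{Aut}(\mathcal{X})$ such that $(x,y)\gamma=(x\alpha,y)$ for all $(x,y)\in\mathcal{X}\times\mathcal{Y}$; that is, $\gamma$ may be regarded as an automorphism of $\mathcal{X}$.
   Context: A graph has a set of vertices and a set of darts, each dart $d$ having a starting vertex and an inverse dart $d^{-1}$ (an involution; semi-edges $d=d^{-1}$ and parallel edges are allowed). An $n$-premaniplex is a graph whose edges are coloured with $\{0,\dots,n-1\}$ such that every vertex (called a flag) is the start of exactly one dart of each colour, and for $|i-j|\ge 2$ every alternating path of length 4 with colours $i,j$ is closed. For a flag $x$, $x^i$ denotes the end of the $i$-dart at $x$. The universal Coxeter group $\mathcal{C}^n=\langle r_0,\dots,r_{n-1}\mid r_i^2=1,\ (r_ir_j)^2=1 \text{ for } |i-j|\ge2\rangle$ acts on the left on the flags of any $n$-premaniplex by $r_ix=x^i$. A homomorphism of premaniplexes preserves $i$-adjacency for every $i$; automorphisms act on the right, so $(\omega x)\gamma=\omega(x\gamma)$ for every $\omega\in\mathcal{C}^n$. For a flag $y$ of an $m$-premaniplex $\mathcal{Y}$ and $\omega\in\mathcal{C}^m$, $W_\omega(y)$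 denotes the homotopy class of paths starting at $y$ whose colours $i_1,\dots,i_k$ (in order) satisfy $r_{i_k}\cdots r_{i_1}=\omega$ (two paths are homotopic if they have the same start and the same associated element); it ends at $\omega y$. These classes form the fundamental groupoid $\Pi(\mathcal{Y})$ under concatenation, and $\Pi^y(\mathcal{Y})$ is the group of closed ones at $y$. A voltage assignment is $\eta:\Pi(\mathcal{Y})\to\mathcal{C}^n$ with $\eta(W_1W_2)=\eta(W_2)\eta(W_1)$ whenever $W_1W_2$ is defined; $(\mathcal{Y},\eta)$ with $\mathcal{Y}$ an $m$-premaniplex is an $(n,m)$-voltage operator. For an $n$-premaniplex $\mathcal{X}$, $\mathcal{X}\rtimes_\eta\mathcal{Y}$ is the $m$-premaniplex with flag set $\mathcal{X}\times\mathcal{Y}$ and $(x,y)^i=(\eta(W_{r_i}(y))x,\ r_iy)$ for $i\in\{0,\dots,m-1\}$; thus $\omega(x,y)=(\eta(W_\omega(y))x,\omega y)$. The operator preserves connectivity if $\mathcal{X}\rtimes_\eta\mathcal{Y}$ is connected whenever $\mathcal{X}$ is connected. Standing convention: $\mathcal{Y}$ has a spanning tree all of whose darts have trivial voltage. *)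

theory Defs
  imports Main
begin

text \<open>Words over colours {0..<n} are lists in PATH order: the list [i1,...,ik]
  stands for the element r_ik ... r_i1 of the universal Coxeter group C^n.\<close>

definition words :: "nat \<Rightarrow> nat list set" where
  "words n = {w. set w \<subseteq> {..<n}}"

inductive cox_eq :: "nat \<Rightarrow> nat list \<Rightarrow> nat list \<Rightarrow> bool" for n :: nat where
  refl: "w \<in> words n \<Longrightarrow> cox_eq n w w"
| sym: "cox_eq n a b \<Longrightarrow> cox_eq n b a"
| trans: "cox_eq n a b \<Longrightarrow> cox_eq n b c \<Longrightarrow> cox_eq n a c"
| cancel: "u \<in> words n \<Longrightarrow> v \<in> words n \<Longrightarrow> i < n \<Longrightarrow>
      cox_eq n (u @ [i, i] @ v) (u @ v)"
| comm: "u \<in> words n \<Longrightarrow> v \<in> words n \<Longrightarrow> i < n \<Longrightarrow> j < n \<Longrightarrow>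
      (i + 2 \<le> j \<or> j + 2 \<le> i) \<Longrightarrow> cox_eq n (u @ [i, j] @ v) (u @ [j, i] @ v)"

text \<open>A premaniplex with flag set F; s i x is x^i, the end of the i-dart at x.\<close>
definition premaniplex :: "nat \<Rightarrow> 'a set \<Rightarrow> (nat \<Rightarrow> 'a \<Rightarrow> 'a) \<Rightarrow> bool" where
  "premaniplex n F s \<longleftrightarrow>
     (\<forall>x\<in>F. \<forall>i<n. s i x \<in> F \<and> s i (s i x) = x) \<and>
     (\<forall>x\<in>F. \<forall>i<n. \<forall>j<n. (i + 2 \<le> j \<or> j + 2 \<le> i) \<longrightarrow> s j (s i (s j (s i x))) = x)"

definition act :: "(nat \<Rightarrow> 'a \<Rightarrow> 'a) \<Rightarrow> nat list \<Rightarrow> 'a \<Rightarrow> 'a" where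
  "act s w x = foldl (\<lambda>z i. s i z) x w"

definition adj_rel :: "nat \<Rightarrow> 'a set \<Rightarrow> (nat \<Rightarrow> 'a \<Rightarrow> 'a) \<Rightarrow> ('a \<times> 'a) set" where
  "adj_rel n F s = {(x, s i x) | x i. x \<in> F \<and> i < n}"

definition pm_connected :: "nat \<Rightarrow> 'a set \<Rightarrow> (nat \<Rightarrow> 'a \<Rightarrow> 'a) \<Rightarrow> bool" where
  "pm_connected n F s \<longleftrightarrow> (\<forall>a\<in>F. \<forall>b\<in>F. (a, b) \<in> (adj_rel n F s)\<^sup>*)"

definition pm_automorphism :: "nat \<Rightarrow> 'a set \<Rightarrow> (nat \<Rightarrow> 'a \<Rightarrow> 'a) \<Rightarrow> ('a \<Rightarrow> 'a) \<Rightarrow> bool" where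
  "pm_automorphism n F s g \<longleftrightarrow> bij_betw g F F \<and> (\<forall>x\<in>F. \<forall>i<n. g (s i x) = s i (g x))"

text \<open>A voltage assignment eta on the fundamental groupoid of the m-premaniplex (FY,sY):
  eta y w is the voltage of the class W_omega(y), omega being the element represented by w.\<close>
definition voltage_assignment ::
  "nat \<Rightarrow> nat \<Rightarrow> 'y set \<Rightarrow> (nat \<Rightarrow> 'y \<Rightarrow> 'y) \<Rightarrow> ('y \<Rightarrow> nat list \<Rightarrow> nat list) \<Rightarrow> bool" where
  "voltage_assignment n m FY sY eta \<longleftrightarrow>
     (\<forall>y\<in>FY. \<forall>w\<in>words m. eta y w \<in> words n) \<and>
     (\<forall>y\<in>FY. \<forall>w w'. cox_eq m w w' \<longrightarrow> cox_eq n (eta y w) (eta y w')) \<and>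
     (\<forall>y\<in>FY. \<forall>w1\<in>words m. \<forall>w2\<in>words m.
        cox_eq n (eta y (w1 @ w2)) (eta y w1 @ eta (act sY w1 y) w2))"

definition mix_op :: "(nat \<Rightarrow> 'x \<Rightarrow> 'x) \<Rightarrow> (nat \<Rightarrow> 'y \<Rightarrow> 'y) \<Rightarrow> ('y \<Rightarrow> nat list \<Rightarrow> nat list)
     \<Rightarrow> nat \<Rightarrow> 'x \<times> 'y \<Rightarrow> 'x \<times> 'y" where
  "mix_op sX sY eta i p = (act sX (eta (snd p) [i]) (fst p), sY i (snd p))"

text \<open>Preserving connectivity. Flag sets of X are taken inside nat: every connected
  premaniplex (finitely many colours) is countable, so this is no restriction.\<close>
definition preserves_connectivity ::
  "nat \<Rightarrow> nat \<Rightarrow> 'y set \<Rightarrow> (nat \<Rightarrow> 'y \<Rightarrow> 'y) \<Rightarrow> ('y \<Rightarrow> nat list \<Rightarrow> nat list) \<Rightarrow> bool" where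
  "preserves_connectivity n m FY sY eta \<longleftrightarrow>
     (\<forall>(FX :: nat set) sX. premaniplex n FX sX \<and> pm_connected n FX sX \<longrightarrow>
        pm_connected m (FX \<times> FY) (mix_op sX sY eta))"

text \<open>Spanning trees of Y given as sets of darts; the i-dart at y is (y,i), its inverse
  (y^i, i). A tree: symmetric dart set, connected and spanning, every edge a bridge
  (equivalently: acyclic; semi-edges and parallel edges are thereby excluded).\<close>
definition dart_rel :: "(nat \<Rightarrow> 'y \<Rightarrow> 'y) \<Rightarrow> ('y \<times> nat) set \<Rightarrow> ('y \<times> 'y) set" where
  "dart_rel sY T = {(y, sY i y) | y i. (y, i) \<in> T}"

definition spans_connected :: "'y set \<Rightarrow> (nat \<Rightarrow> 'y \<Rightarrow> 'y) \<Rightarrow> ('y \<times> nat) set \<Rightarrow> bool" where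
  "spans_connected FY sY T \<longleftrightarrow> (\<forall>a\<in>FY. \<forall>b\<in>FY. (a, b) \<in> (dart_rel sY T)\<^sup>*)"

definition spanning_tree :: "nat \<Rightarrow> 'y set \<Rightarrow> (nat \<Rightarrow> 'y \<Rightarrow> 'y) \<Rightarrow> ('y \<times> nat) set \<Rightarrow> bool" where
  "spanning_tree m FY sY T \<longleftrightarrow>
     T \<subseteq> FY \<times> {..<m} \<and>
     (\<forall>(y, i)\<in>T. (sY i y, i) \<in> T) \<and>
     spans_connected FY sY T \<and>
     (\<forall>(y, i)\<in>T. \<not> spans_connected FY sY (T - {(y, i), (sY i y, i)}))"

text \<open>Standing convention: a spanning tree all of whose darts have trivial voltage.\<close>
definition has_trivial_spanning_tree ::
  "nat \<Rightarrow> nat \<Rightarrow> 'y set \<Rightarrow> (nat \<Rightarrow> 'y \<Rightarrow> 'y) \<Rightarrow> ('y \<Rightarrow> nat list \<Rightarrow> nat list) \<Rightarrow> bool" where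
  "has_trivial_spanning_tree n m FY sY eta \<longleftrightarrow>
     (\<exists>T. spanning_tree m FY sY T \<and> (\<forall>(y, i)\<in>T. cox_eq n (eta y [i]) []))"

end

theory Submission
  imports Defs "HOL-Library.Countable_Set"
begin

text \<open>Put \<open>\<alpha> x = fst ((x, y\<^sub>0)\<gamma>)\<close>. Along a dart of the spanning tree the voltage is trivial, so
  \<open>(x, y)\<^sup>i = (x, y\<^sup>i)\<close>, and since \<open>\<gamma>\<close> commutes with \<open>i\<close>-adjacency the identity
  \<open>(x, y)\<gamma> = (\<alpha> x, y)\<close> propagates from \<open>y\<^sub>0\<close> to every flag of \<open>\<Y>\<close>. To see that \<open>\<alpha>\<close> commutes with
  \<open>r\<^sub>j\<close>, apply preservation of connectivity to the orbit of \<open>(x, \<alpha> x)\<close> in the diagonal action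
  on \<open>\<X> \<times> \<X>\<close>: it yields a closed walk \<open>W\<close> at \<open>y\<^sub>0\<close> whose voltage moves both \<open>x\<close> and \<open>\<alpha> x\<close> to
  their \<open>j\<close>-neighbours. Transporting \<open>(x, y\<^sub>0)\<close> along \<open>W\<close> before and after \<open>\<gamma>\<close> gives
  \<open>\<alpha> (x\<^sup>j) = (\<alpha> x)\<^sup>j\<close>.\<close>

lemma act_Nil [simp]: "act s [] x = x"
  by (simp add: act_def)

lemma act_Cons [simp]: "act s (i # w) x = act s w (s i x)"
  by (simp add: act_def)

lemma act_append [simp]: "act s (u @ v) x = act s v (act s u x)"
  by (simp add: act_def)

lemma words_simps [simp]:
  "[] \<in> words n"
  "i # w \<in> words n \<longleftrightarrow> i < n \<and> w \<in> words n"
  "u @ v \<in> words n \<longleftrightarrow> u \<in> words n \<and> v \<in> words n"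
  "rev w \<in> words n \<longleftrightarrow> w \<in> words n"
  by (auto simp: words_def)

lemma countable_words: "countable (words n)"
  by (rule countable_subset[of _ UNIV]) auto

lemma act_closed:
  assumes "\<forall>x\<in>F. \<forall>i<n. s i x \<in> F" and "x \<in> F" and "w \<in> words n"
  shows "act s w x \<in> F"
  using assms(2,3) by (induction w arbitrary: x) (auto simp: assms(1))

lemma premaniplex_closed: "premaniplex n F s \<Longrightarrow> \<forall>x\<in>F. \<forall>i<n. s i x \<in> F"
  by (simp add: premaniplex_def)

lemma premaniplex_involution: "premaniplex n F s \<Longrightarrow> x \<in> F \<Longrightarrow> i < n \<Longrightarrow> s i (s i x) = x"
  by (simp add: premaniplex_def)

lemma premaniplex_act_closed: "premaniplex n F s \<Longrightarrow> x \<in> F \<Longrightarrow> w \<in> words n \<Longrightarrow> act s w x \<in> F"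
  by (rule act_closed[OF premaniplex_closed])

lemma premaniplex_commute:
  assumes pm: "premaniplex n F s" and x: "x \<in> F"
    and ij: "i < n" "j < n" "i + 2 \<le> j \<or> j + 2 \<le> i"
  shows "s j (s i x) = s i (s j x)"
proof -
  define b where "b = s j (s i x)"
  have b: "b \<in> F" "s i b \<in> F"
    using premaniplex_closed[OF pm] x ij unfolding b_def by blast+
  have "s j (s i b) = x"
    using pm x ij unfolding b_def premaniplex_def by blast
  then have "s i b = s j x"
    using premaniplex_involution[OF pm b(2) ij(2)] by metis
  then show ?thesis
    using premaniplex_involution[OF pm b(1) ij(1)] b_def by metis
qed

lemma act_cox_eq:
  assumes pm: "premaniplex n F s"
  shows "cox_eq n w w' \<Longrightarrow> x \<in> F \<Longrightarrow> act s w x = act s w' x"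
proof (induction arbitrary: x rule: cox_eq.induct)
  case (cancel u v i)
  then have "act s u x \<in> F" using premaniplex_act_closed[OF pm] by blast
  then show ?case using premaniplex_involution[OF pm _ cancel(3)] by simp
next
  case (comm u v i j)
  then have "act s u x \<in> F" using premaniplex_act_closed[OF pm] by blast
  then show ?case using premaniplex_commute[OF pm _ comm(3-5)] by simp
qed auto

lemma act_rev_act:
  assumes pm: "premaniplex n F s"
  shows "x \<in> F \<Longrightarrow> w \<in> words n \<Longrightarrow> act s (rev w) (act s w x) = x"
proof (induction w arbitrary: x)
  case (Cons i w)
  then have "s i x \<in> F" using premaniplex_closed[OF pm] by auto
  then show ?case using Cons premaniplex_involution[OF pm] by auto
qed simp

lemma rtrancl_adj_rel_iff:
  assumes cl: "\<forall>x\<in>F. \<forall>i<n. s i x \<in> F" and a: "a \<in> F"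
  shows "(a, b) \<in> (adj_rel n F s)\<^sup>* \<longleftrightarrow> (\<exists>w\<in>words n. b = act s w a)"
proof
  show "(a, b) \<in> (adj_rel n F s)\<^sup>* \<Longrightarrow> \<exists>w\<in>words n. b = act s w a"
  proof (induction rule: rtrancl_induct)
    case base
    show ?case by (intro bexI[of _ "[]"]) auto
  next
    case (step b c)
    then obtain w where "w \<in> words n" "b = act s w a" by blast
    moreover obtain i where "c = s i b" "i < n"
      using step(2) unfolding adj_rel_def by blast
    ultimately show ?case by (intro bexI[of _ "w @ [i]"]) auto
  qed
  have "(a, act s w a) \<in> (adj_rel n F s)\<^sup>*" if "w \<in> words n" for w
    using that
  proof (induction w rule: rev_induct)
    case (snoc i w)
    then have "(act s w a, s i (act s w a)) \<in> adj_rel n F s"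
      using act_closed[OF cl a] unfolding adj_rel_def by auto
    with snoc show ?case by (simp add: rtrancl_into_rtrancl)
  qed simp
  then show "\<exists>w\<in>words n. b = act s w a \<Longrightarrow> (a, b) \<in> (adj_rel n F s)\<^sup>*"
    by blast
qed

lemma pm_connected_iff_act:
  "\<forall>x\<in>F. \<forall>i<n. s i x \<in> F \<Longrightarrow>
    pm_connected n F s \<longleftrightarrow> (\<forall>a\<in>F. \<forall>b\<in>F. \<exists>w\<in>words n. b = act s w a)"
  unfolding pm_connected_def by (simp add: rtrancl_adj_rel_iff)

definition orbit :: "nat \<Rightarrow> (nat \<Rightarrow> 'a \<Rightarrow> 'a) \<Rightarrow> 'a \<Rightarrow> 'a set" where
  "orbit n s p = (\<lambda>w. act s w p) ` words n"

lemma orbit_act_closed: "q \<in> orbit n s p \<Longrightarrow> w \<in> words n \<Longrightarrow> act s w q \<in> orbit n s p"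
  unfolding orbit_def by (auto intro!: image_eqI[of _ _ "_ @ w"])

lemma orbit_self: "p \<in> orbit n s p"
  unfolding orbit_def by (intro image_eqI[of _ _ "[]"]) auto

lemma countable_orbit: "countable (orbit n s p)"
  unfolding orbit_def using countable_words by simp

lemma connected_premaniplex_orbit:
  assumes pm: "premaniplex n F s" and p: "p \<in> F"
  shows "premaniplex n (orbit n s p) s" and "pm_connected n (orbit n s p) s"
proof -
  have sub: "orbit n s p \<subseteq> F"
    unfolding orbit_def using premaniplex_act_closed[OF pm p] by auto
  have cl: "\<forall>x\<in>orbit n s p. \<forall>i<n. s i x \<in> orbit n s p"
    using orbit_act_closed[of _ n s p] by (metis act_Cons act_Nil words_simps(1,2))
  show "premaniplex n (orbit n s p) s"
    using pm sub cl unfolding premaniplex_def by blast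
  have "\<exists>w\<in>words n. b = act s w a" if ab: "a \<in> orbit n s p" "b \<in> orbit n s p" for a b
  proof -
    obtain u v where "u \<in> words n" "v \<in> words n" "a = act s u p" "b = act s v p"
      using ab unfolding orbit_def by blast
    then show ?thesis
      using act_rev_act[OF pm p] by (intro bexI[of _ "rev u @ v"]) auto
  qed
  then show "pm_connected n (orbit n s p) s"
    using pm_connected_iff_act[OF cl] by blast
qed

definition image_op :: "'a set \<Rightarrow> ('a \<Rightarrow> 'b) \<Rightarrow> (nat \<Rightarrow> 'a \<Rightarrow> 'a) \<Rightarrow> nat \<Rightarrow> 'b \<Rightarrow> 'b" where
  "image_op F e s i k = e (s i (inv_into F e k))"

lemma act_image_op:
  assumes pm: "premaniplex n F s" and inj: "inj_on e F"
  shows "a \<in> F \<Longrightarrow> w \<in> words n \<Longrightarrow> act (image_op F e s) w (e a) = e (act s w a)"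
proof (induction w arbitrary: a)
  case (Cons i w)
  then have "s i a \<in> F" using premaniplex_closed[OF pm] by auto
  with Cons inj show ?case by (simp add: image_op_def)
qed simp

lemma connected_premaniplex_image_op:
  assumes pm: "premaniplex n F s" and con: "pm_connected n F s" and inj: "inj_on e F"
  shows "premaniplex n (e ` F) (image_op F e s)" and "pm_connected n (e ` F) (image_op F e s)"
proof -
  have act_e: "act (image_op F e s) w (e a) = e (act s w a)" if "a \<in> F" "w \<in> words n" for w a
    using act_image_op[OF pm inj that] .
  have "s j (s i (s j (s i a))) = a"
    if "a \<in> F" "i < n" "j < n" "i + 2 \<le> j \<or> j + 2 \<le> i" for a i j
    using pm that unfolding premaniplex_def by blast
  moreover have "s i a \<in> F" "s i (s i a) = a" if "a \<in> F" "i < n" for a i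
    using pm that unfolding premaniplex_def by blast+
  ultimately show pm': "premaniplex n (e ` F) (image_op F e s)"
    using act_e[where w = "[_, _, _, _]"] act_e[where w = "[_, _]"] act_e[where w = "[_]"]
    unfolding premaniplex_def by auto
  show "pm_connected n (e ` F) (image_op F e s)"
    unfolding pm_connected_iff_act[OF premaniplex_closed[OF pm']]
  proof (intro ballI)
    fix k l assume "k \<in> e ` F" "l \<in> e ` F"
    then obtain a b where "a \<in> F" "b \<in> F" "k = e a" "l = e b" by blast
    then show "\<exists>w\<in>words n. l = act (image_op F e s) w k"
      using con act_e by (fastforce simp: pm_connected_iff_act[OF premaniplex_closed[OF pm]])
  qed
qed

definition diag_op :: "(nat \<Rightarrow> 'a \<Rightarrow> 'a) \<Rightarrow> nat \<Rightarrow> 'a \<times> 'a \<Rightarrow> 'a \<times> 'a" where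
  "diag_op s i p = (s i (fst p), s i (snd p))"

lemma act_diag_op: "act (diag_op s) w (a, b) = (act s w a, act s w b)"
  by (induction w arbitrary: a b) (auto simp: diag_op_def)

lemma premaniplex_diag_op: "premaniplex n F s \<Longrightarrow> premaniplex n (F \<times> F) (diag_op s)"
  unfolding premaniplex_def diag_op_def by auto

lemma voltage_words:
  "voltage_assignment n m FY sY eta \<Longrightarrow> y \<in> FY \<Longrightarrow> w \<in> words m \<Longrightarrow> eta y w \<in> words n"
  by (simp add: voltage_assignment_def)

lemma voltage_Nil_acts_trivially:
  assumes pmX: "premaniplex n FX sX" and va: "voltage_assignment n m FY sY eta"
    and x: "x \<in> FX" and y: "y \<in> FY"
  shows "act sX (eta y []) x = x"
proof -
  define e where "e = eta y []"
  have e: "e \<in> words n" using voltage_words[OF va y] unfolding e_def by simp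
  have "cox_eq n (eta y ([] @ [])) (eta y [] @ eta (act sY [] y) [])"
    using va y words_simps(1)[of m] unfolding voltage_assignment_def by blast
  then have "cox_eq n e (e @ e)"
    unfolding e_def by simp
  \<comment> \<open>an idempotent element of a group is trivial\<close>
  from act_cox_eq[OF pmX this x] have "act sX e x = act sX e (act sX e x)"
    by simp
  then have "act sX (rev e) (act sX e x) = act sX (rev e) (act sX e (act sX e x))"
    by simp
  then show ?thesis
    using act_rev_act[OF pmX _ e] premaniplex_act_closed[OF pmX x e] x unfolding e_def by simp
qed

lemma act_mix_op:
  assumes pmX: "premaniplex n FX sX" and va: "voltage_assignment n m FY sY eta"
    and x: "x \<in> FX" and y: "y \<in> FY"
  shows "w \<in> words m \<Longrightarrow> act (mix_op sX sY eta) w (x, y) = (act sX (eta y w) x, act sY w y)"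
proof (induction w rule: rev_induct)
  case Nil
  show ?case using voltage_Nil_acts_trivially[OF pmX va x y] by simp
next
  case (snoc i w)
  then have w: "w \<in> words m" and i: "i < m" by auto
  have "cox_eq n (eta y (w @ [i])) (eta y w @ eta (act sY w y) [i])"
    using va y w i unfolding voltage_assignment_def by simp
  moreover have "act sX (eta y w) x \<in> FX"
    using premaniplex_act_closed[OF pmX x voltage_words[OF va y w]] .
  ultimately show ?case
    using snoc w act_cox_eq[OF pmX _ x] by (simp add: mix_op_def)
qed

lemma mix_op_closed:
  assumes pmX: "premaniplex n FX sX" and pmY: "premaniplex m FY sY"
    and va: "voltage_assignment n m FY sY eta"
  shows "\<forall>p\<in>FX \<times> FY. \<forall>i<m. mix_op sX sY eta i p \<in> FX \<times> FY"
  using premaniplex_act_closed[OF pmX _ voltage_words[OF va]] premaniplex_closed[OF pmY]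
  by (auto simp: mix_op_def)

text \<open>Preservation of connectivity is only assumed for flag sets inside \<^typ>\<open>nat\<close>; an orbit is
  countable, so its copy under \<^const>\<open>to_nat_on\<close> qualifies.\<close>

lemma closed_walk_realising_word:
  assumes pc: "preserves_connectivity n m FY sY eta" and pm: "premaniplex n F s"
    and pmY: "premaniplex m FY sY" and va: "voltage_assignment n m FY sY eta"
    and p: "p \<in> F" and y: "y \<in> FY" and v: "v \<in> words n"
  shows "\<exists>w\<in>words m. act sY w y = y \<and> act s (eta y w) p = act s v p"
proof -
  define C where "C = orbit n s p"
  define e where "e = to_nat_on C"
  define s' where "s' = image_op C e s"
  have pmC: "premaniplex n C s" and conC: "pm_connected n C s"
    using connected_premaniplex_orbit[OF pm p] unfolding C_def by auto
  have inj: "inj_on e C"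
    unfolding e_def C_def by (rule inj_on_to_nat_on[OF countable_orbit])
  have act_e: "act s' u (e a) = e (act s u a)" if "a \<in> C" "u \<in> words n" for a u
    using act_image_op[OF pmC inj that] unfolding s'_def .
  have pm': "premaniplex n (e ` C) s'" and con': "pm_connected n (e ` C) s'"
    using connected_premaniplex_image_op[OF pmC conC inj] unfolding s'_def by auto
  have pC: "p \<in> C"
    unfolding C_def by (rule orbit_self)
  have in_C: "act s u p \<in> C" if "u \<in> words n" for u
    unfolding C_def by (rule orbit_act_closed[OF orbit_self that])
  have "pm_connected m (e ` C \<times> FY) (mix_op s' sY eta)"
    using pc pm' con' unfolding preserves_connectivity_def by blast
  moreover have "(e p, y) \<in> e ` C \<times> FY" and "(e (act s v p), y) \<in> e ` C \<times> FY"
    using y pC in_C[OF v] by auto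
  ultimately obtain w where w: "w \<in> words m"
    and walk: "(e (act s v p), y) = act (mix_op s' sY eta) w (e p, y)"
    unfolding pm_connected_iff_act[OF mix_op_closed[OF pm' pmY va]] by blast
  have u: "eta y w \<in> words n" using voltage_words[OF va y w] .
  have "e (act s (eta y w) p) = e (act s v p)" and closed: "act sY w y = y"
    using walk act_mix_op[OF pm' va _ y w] act_e[OF pC u] pC by auto
  then have "act s (eta y w) p = act s v p"
    using inj_onD[OF inj _ in_C[OF u] in_C[OF v]] by blast
  with w closed show ?thesis by blast
qed

lemma pm_automorphism_act:
  assumes "pm_automorphism m F s g" and cl: "\<forall>p\<in>F. \<forall>i<m. s i p \<in> F" and p: "p \<in> F"
  shows "w \<in> words m \<Longrightarrow> g (act s w p) = act s w (g p)"
proof (induction w rule: rev_induct)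
  case (snoc i w)
  then show ?case
    using assms act_closed[OF cl p] unfolding pm_automorphism_def by auto
qed simp

lemma mix_op_trivial_voltage:
  assumes pmX: "premaniplex n FX sX" and x: "x \<in> FX" and triv: "cox_eq n (eta y [i]) []"
  shows "mix_op sX sY eta i (x, y) = (x, sY i y)"
  using act_cox_eq[OF pmX triv x] by (simp add: mix_op_def)

lemma automorphism_on_fibres:
  assumes pmX: "premaniplex n FX sX" and tree: "has_trivial_spanning_tree n m FY sY eta"
    and aut: "pm_automorphism m (FX \<times> FY) (mix_op sX sY eta) g"
    and y0: "y0 \<in> FY" and base: "\<forall>x\<in>FX. g (x, y0) = (\<alpha> x, y0)"
    and y: "y \<in> FY" and x: "x \<in> FX"
  shows "g (x, y) = (\<alpha> x, y)"
proof -
  obtain T where T: "spanning_tree m FY sY T" and triv: "\<forall>(y, i)\<in>T. cox_eq n (eta y [i]) []"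
    using tree unfolding has_trivial_spanning_tree_def by blast
  have "(y0, y) \<in> (dart_rel sY T)\<^sup>*"
    using T y0 y unfolding spanning_tree_def spans_connected_def by blast
  then show ?thesis
  proof (induction rule: rtrancl_induct)
    case base
    show ?case using assms(5) x by blast
  next
    case (step b c)
    then obtain i where bi: "(b, i) \<in> T" and c: "c = sY i b"
      unfolding dart_rel_def by blast
    then have b: "b \<in> FY" and i: "i < m" and ti: "cox_eq n (eta b [i]) []"
      using T triv unfolding spanning_tree_def by auto
    have \<alpha>x: "\<alpha> x \<in> FX"
      using aut x b step.IH unfolding pm_automorphism_def by (metis bij_betwE mem_Sigma_iff)
    have "g (x, c) = g (mix_op sX sY eta i (x, b))"
      using mix_op_trivial_voltage[where eta = eta and y = b, OF pmX x ti] c by simp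
    also have "\<dots> = mix_op sX sY eta i (g (x, b))"
      using aut x b i unfolding pm_automorphism_def by blast
    also have "\<dots> = (\<alpha> x, c)"
      using step.IH mix_op_trivial_voltage[where eta = eta and y = b, OF pmX \<alpha>x ti] c by simp
    finally show ?case .
  qed
qed

lemma bij_betw_fibre:
  assumes bij: "bij_betw g (A \<times> B) (A \<times> B)" and y0: "y0 \<in> B"
    and fib: "\<forall>x\<in>A. \<forall>y\<in>B. g (x, y) = (\<alpha> x, y)"
  shows "bij_betw \<alpha> A A"
proof (rule bij_betw_imageI)
  show "inj_on \<alpha> A"
  proof (rule inj_onI)
    fix x x' assume "x \<in> A" "x' \<in> A" "\<alpha> x = \<alpha> x'"
    then have "g (x, y0) = g (x', y0)" using fib y0 by simp
    then show "x = x'"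
      using bij_betw_imp_inj_on[OF bij] \<open>x \<in> A\<close> \<open>x' \<in> A\<close> y0 by (auto dest: inj_onD)
  qed
  show "\<alpha> ` A = A"
  proof
    show "\<alpha> ` A \<subseteq> A"
      using bij_betwE[OF bij] fib y0 by fastforce
    show "A \<subseteq> \<alpha> ` A"
    proof
      fix x' assume "x' \<in> A"
      with y0 have "(x', y0) \<in> g ` (A \<times> B)"
        using bij_betw_imp_surj_on[OF bij] by simp
      then show "x' \<in> \<alpha> ` A"
        using fib by auto
    qed
  qed
qed

lemma fibre_automorphism_commutes:
  assumes pmX: "premaniplex n FX sX" and pmY: "premaniplex m FY sY"
    and va: "voltage_assignment n m FY sY eta" and pc: "preserves_connectivity n m FY sY eta"
    and aut: "pm_automorphism m (FX \<times> FY) (mix_op sX sY eta) g"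
    and y0: "y0 \<in> FY" and base: "\<forall>x\<in>FX. g (x, y0) = (\<alpha> x, y0)" and \<alpha>: "\<alpha> ` FX \<subseteq> FX"
    and x: "x \<in> FX" and j: "j < n"
  shows "\<alpha> (sX j x) = sX j (\<alpha> x)"
proof -
  let ?M = "mix_op sX sY eta"
  have "(x, \<alpha> x) \<in> FX \<times> FX" using x \<alpha> by auto
  from closed_walk_realising_word[OF pc premaniplex_diag_op[OF pmX] pmY va this y0, of "[j]"] j
  obtain w where w: "w \<in> words m" and closed: "act sY w y0 = y0"
    and "act (diag_op sX) (eta y0 w) (x, \<alpha> x) = act (diag_op sX) [j] (x, \<alpha> x)"
    by auto
  then have "act ?M w (x, y0) = (sX j x, y0)" and "act ?M w (\<alpha> x, y0) = (sX j (\<alpha> x), y0)"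
    using act_mix_op[OF pmX va _ y0 w] x \<alpha> by (auto simp: act_diag_op diag_op_def)
  moreover have "g (act ?M w (x, y0)) = act ?M w (g (x, y0))"
    using pm_automorphism_act[OF aut mix_op_closed[OF pmX pmY va] _ w] x y0 by blast
  moreover have "sX j x \<in> FX" using premaniplex_closed[OF pmX] x j by blast
  ultimately show ?thesis using base x by simp
qed

theorem lemma4p1:
  fixes n m :: nat
    and FX :: "'x set" and sX :: "nat \<Rightarrow> 'x \<Rightarrow> 'x"
    and FY :: "'y set" and sY :: "nat \<Rightarrow> 'y \<Rightarrow> 'y"
    and eta :: "'y \<Rightarrow> nat list \<Rightarrow> nat list"
    and g :: "'x \<times> 'y \<Rightarrow> 'x \<times> 'y"
  assumes "premaniplex n FX sX"
    and "pm_connected n FX sX"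
    and "premaniplex m FY sY"
    and "voltage_assignment n m FY sY eta"
    and "has_trivial_spanning_tree n m FY sY eta"
    and "preserves_connectivity n m FY sY eta"
    and "pm_automorphism m (FX \<times> FY) (mix_op sX sY eta) g"
    and "\<forall>x\<in>FX. \<forall>y\<in>FY. snd (g (x, y)) = y"
  shows "\<exists>a. pm_automorphism n FX sX a \<and> (\<forall>x\<in>FX. \<forall>y\<in>FY. g (x, y) = (a x, y))"
proof (cases "FY = {}")
  case True
  have "pm_automorphism n FX sX id" unfolding pm_automorphism_def by simp
  with True show ?thesis by blast
next
  case False
  then obtain y0 where y0: "y0 \<in> FY" by blast
  define \<alpha> where "\<alpha> x = fst (g (x, y0))" for x
  have base: "\<forall>x\<in>FX. g (x, y0) = (\<alpha> x, y0)"
    using assms(8) y0 unfolding \<alpha>_def by (metis prod.collapse)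
  then have fib: "\<forall>x\<in>FX. \<forall>y\<in>FY. g (x, y) = (\<alpha> x, y)"
    using automorphism_on_fibres[OF assms(1,5,7) y0] by blast
  have bij: "bij_betw \<alpha> FX FX"
    using bij_betw_fibre[OF _ y0 fib] assms(7) unfolding pm_automorphism_def by simp
  have "\<forall>x\<in>FX. \<forall>j<n. \<alpha> (sX j x) = sX j (\<alpha> x)"
    using fibre_automorphism_commutes[OF assms(1,3,4,6,7) y0 base
        equalityD1[OF bij_betw_imp_surj_on[OF bij]]] by blast
  with bij fib show ?thesis unfolding pm_automorphism_def by blast
qed

end
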